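(* Let $k \ge 1$ and let $V = L \sqcup R$ be a finite set of nails split into disjoint parts with $|L| = n_1$, $|R| = n_2$. Call an integer $j$ feasible if $\max(0, k - n_2) \le j \le \min(k, n_1)$. For a set $J$ of feasible indices define the function $f_J$ on subsets $S \subseteq V$ by $f_J(S) = \mathsf{fall}$ if there is $j \in J$ with $|S \cap L| \ge j$ and $|S \cap R| \ge k - j$, and $f_J(S) = \mathsf{hang}$ otherwise. Let $J_1, J_2$ be disjoint nonempty sets of feasible indices, and let $S \subseteq V$ satisfy $f_{J_1}(S) = f_{J_2}(S) = \mathsf{hang}$. Then there exists $S'$ with $S \subseteq S' \subseteq V$ and $f_{J_1}(S') \ne f_{J_2}(S')$.
   Context: Nails are elements of a finite set; the outcomes are $\mathsf{hang}$ and $\mathsf{fall}$. *)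

theory Defs
  imports Main
begin

datatype outcome = hang | fall

definition feasible :: "nat \<Rightarrow> nat \<Rightarrow> nat \<Rightarrow> int \<Rightarrow> bool" where
  "feasible k n1 n2 j \<longleftrightarrow> max 0 (int k - int n2) \<le> j \<and> j \<le> min (int k) (int n1)"

definition fJ :: "'a set \<Rightarrow> 'a set \<Rightarrow> nat \<Rightarrow> int set \<Rightarrow> 'a set \<Rightarrow> outcome" where
  "fJ L R k J S =
     (if \<exists>j\<in>J. int (card (S \<inter> L)) \<ge> j \<and> int (card (S \<inter> R)) \<ge> int k - j
      then fall else hang)"

end

theory Submission
  imports Defs
begin

text \<open>Let \<open>a = |S \<inter> L|\<close>, \<open>b = |S \<inter> R|\<close> and \<open>J = J\<^sub>1 \<union> J\<^sub>2\<close>. Index \<open>j\<close> is triggered by a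
  set with \<open>x\<close> nails in \<open>L\<close> and \<open>y\<close> in \<open>R\<close> iff \<open>j \<le> x\<close> and \<open>k - j \<le> y\<close>. Choose \<open>j \<in> J\<close> as the
  largest index \<open>\<le> a\<close> if there is one, and as \<open>min J\<close> otherwise, and enlarge \<open>S\<close> to a set
  with \<open>max a j\<close> nails in \<open>L\<close> and \<open>max b (k - j)\<close> in \<open>R\<close>. Since no index of \<open>J\<close> was
  triggered by \<open>S\<close>, the new set triggers \<open>j\<close> and no other index of \<open>J\<close>, so exactly one of
  \<open>f\<^bsub>J\<^sub>1\<^esub>\<close>, \<open>f\<^bsub>J\<^sub>2\<^esub>\<close> falls on it.\<close>

lemma fJ_eq_fall_iff:
  "fJ L R k J S = fall \<longleftrightarrow>
     (\<exists>j\<in>J. j \<le> int (card (S \<inter> L)) \<and> int k - j \<le> int (card (S \<inter> R)))"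
  by (simp add: fJ_def)

lemma finite_feasible: "finite {j. feasible k n1 n2 j}"
  by (rule finite_subset[of _ "{0..int k}"]) (auto simp: feasible_def)

lemma exists_uniquely_triggered_index:
  fixes J :: "int set" and a b k :: int
  assumes "finite J" "J \<noteq> {}" and untriggered: "\<forall>j\<in>J. \<not> (j \<le> a \<and> k - j \<le> b)"
  shows "\<exists>j\<in>J. \<forall>j'\<in>J. j' \<le> max a j \<and> k - j' \<le> max b (k - j) \<longrightarrow> j' = j"
proof (cases "\<exists>j\<in>J. j \<le> a")
  case True
  define j where "j = Max {j\<in>J. j \<le> a}"
  have fin: "finite {j\<in>J. j \<le> a}" using assms(1) by simp
  have j: "j \<in> J" "j \<le> a"
    using Max_in[OF fin] True unfolding j_def by auto
  have j_greatest: "j' \<le> j" if "j' \<in> J" "j' \<le> a" for j'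
    using fin that unfolding j_def by auto
  show ?thesis
  proof (intro bexI[OF _ \<open>j \<in> J\<close>] ballI impI)
    fix j' assume j': "j' \<in> J" "j' \<le> max a j \<and> k - j' \<le> max b (k - j)"
    then have "j' \<le> a" using j by simp
    with j' untriggered have "k - j' \<le> k - j" by force
    with j_greatest j' \<open>j' \<le> a\<close> show "j' = j" by force
  qed
next
  case False
  define j where "j = Min J"
  have j: "j \<in> J" unfolding j_def using Min_in[OF assms(1,2)] .
  show ?thesis
  proof (intro bexI[OF _ j] ballI impI)
    fix j' assume j': "j' \<in> J" "j' \<le> max a j \<and> k - j' \<le> max b (k - j)"
    have "a < j" using False j by auto
    with j' have "j' \<le> j" by simp
    moreover have "j \<le> j'" using assms(1) j' unfolding j_def by simp
    ultimately show "j' = j" by simp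
  qed
qed

lemma exists_superset_with_part_cards:
  assumes "finite L" "finite R" "L \<inter> R = {}" "S \<subseteq> L \<union> R"
    and "card (S \<inter> L) \<le> x" "x \<le> card L" "card (S \<inter> R) \<le> y" "y \<le> card R"
  obtains S' where "S \<subseteq> S'" "S' \<subseteq> L \<union> R" "card (S' \<inter> L) = x" "card (S' \<inter> R) = y"
proof -
  obtain CL where CL: "S \<inter> L \<subseteq> CL" "CL \<subseteq> L" "card CL = x"
    using exists_subset_between[of "S \<inter> L" x L] assms by auto
  obtain CR where CR: "S \<inter> R \<subseteq> CR" "CR \<subseteq> R" "card CR = y"
    using exists_subset_between[of "S \<inter> R" y R] assms by auto
  have "(CL \<union> CR) \<inter> L = CL" "(CL \<union> CR) \<inter> R = CR"
    using CL CR assms(3) by auto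
  moreover have "S \<subseteq> CL \<union> CR" "CL \<union> CR \<subseteq> L \<union> R"
    using CL CR assms(4) by auto
  ultimately show thesis
    using that CL(3) CR(3) by simp
qed

lemma exists_superset_triggering_single_index:
  assumes "finite L" "finite R" "L \<inter> R = {}" "S \<subseteq> L \<union> R"
    and "J \<noteq> {}" "\<forall>j\<in>J. feasible k (card L) (card R) j" "fJ L R k J S = hang"
  obtains S' j where "S \<subseteq> S'" "S' \<subseteq> L \<union> R" "j \<in> J"
    "\<And>J'. J' \<subseteq> J \<Longrightarrow> fJ L R k J' S' = fall \<longleftrightarrow> j \<in> J'"
proof -
  define a where "a = int (card (S \<inter> L))"
  define b where "b = int (card (S \<inter> R))"
  have "finite J"
    by (rule finite_subset[OF _ finite_feasible]) (use assms(6) in blast)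
  moreover have "\<forall>j\<in>J. \<not> (j \<le> a \<and> int k - j \<le> b)"
    using assms(7) fJ_eq_fall_iff[of L R k J S] unfolding a_def b_def by auto
  ultimately obtain j where "j \<in> J" and unique:
    "\<forall>j'\<in>J. j' \<le> max a j \<and> int k - j' \<le> max b (int k - j) \<longrightarrow> j' = j"
    using exists_uniquely_triggered_index[OF _ assms(5)] by blast
  have j: "0 \<le> j" "j \<le> int (card L)" "int k - j \<le> int (card R)" "j \<le> int k"
    using assms(6) \<open>j \<in> J\<close> unfolding feasible_def by auto
  have "card (S \<inter> L) \<le> card L" "card (S \<inter> R) \<le> card R"
    using assms(1,2) by (simp_all add: card_mono)
  then have "card (S \<inter> L) \<le> nat (max a j)" "nat (max a j) \<le> card L"
    "card (S \<inter> R) \<le> nat (max b (int k - j))" "nat (max b (int k - j)) \<le> card R"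
    using j unfolding a_def b_def by auto
  then obtain S' where S': "S \<subseteq> S'" "S' \<subseteq> L \<union> R"
    "card (S' \<inter> L) = nat (max a j)" "card (S' \<inter> R) = nat (max b (int k - j))"
    by (rule exists_superset_with_part_cards[OF assms(1-4)])
  have "fJ L R k J' S' = fall \<longleftrightarrow> j \<in> J'" if "J' \<subseteq> J" for J'
  proof -
    have "int (card (S' \<inter> L)) = max a j" "int (card (S' \<inter> R)) = max b (int k - j)"
      using S'(3,4) j unfolding a_def b_def by auto
    then show ?thesis
      unfolding fJ_eq_fall_iff using unique that by (auto intro!: bexI[of _ j])
  qed
  with S'(1,2) \<open>j \<in> J\<close> show thesis using that by blast
qed

theorem lemma3:
  fixes L R S :: "'a set" and k :: nat and J1 J2 :: "int set"
  assumes "k \<ge> 1"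
    and "finite L" and "finite R" and "L \<inter> R = {}"
    and "\<forall>j\<in>J1. feasible k (card L) (card R) j"
    and "\<forall>j\<in>J2. feasible k (card L) (card R) j"
    and "J1 \<inter> J2 = {}" and "J1 \<noteq> {}" and "J2 \<noteq> {}"
    and "S \<subseteq> L \<union> R"
    and "fJ L R k J1 S = hang" and "fJ L R k J2 S = hang"
  shows "\<exists>S'. S \<subseteq> S' \<and> S' \<subseteq> L \<union> R \<and> fJ L R k J1 S' \<noteq> fJ L R k J2 S'"
proof -
  have "fJ L R k (J1 \<union> J2) S = hang"
    using assms(11,12) by (auto simp: fJ_def split: if_splits)
  then obtain S' j where S': "S \<subseteq> S'" "S' \<subseteq> L \<union> R" and "j \<in> J1 \<union> J2"
    and triggers: "\<And>J'. J' \<subseteq> J1 \<union> J2 \<Longrightarrow> fJ L R k J' S' = fall \<longleftrightarrow> j \<in> J'"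
    using exists_superset_triggering_single_index[OF assms(2-4,10), of "J1 \<union> J2" k]
      assms(5,6,8) by blast
  have "fJ L R k J1 S' \<noteq> fJ L R k J2 S'"
    using triggers[of J1] triggers[of J2] \<open>j \<in> J1 \<union> J2\<close> assms(7) by auto
  with S' show ?thesis by blast
qed

end
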